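(* Let $M$ be a loopless matroid on $E=\{0,\dots,n\}$. The Bergman classes $\{\Delta_{M'} : M' \text{ a loopless relative nested quotient of } M\}$ are linearly independent in $\operatorname{MW}_\bullet(\Sigma_{A_n})$.
   Context: $\Sigma_{A_n}$ is the braid fan in $\mathbb R^E/\mathbb R\mathbf e_E$, with cones $\operatorname{Cone}(u_{S_1},\dots,u_{S_k})$ for chains of subsets $\emptyset\subsetneq S_1\subsetneq\cdots\subsetneq S_k\subsetneq E$, where $u_S$ is the image of $\sum_{i\in S}\mathbf e_i$; $\operatorname{MW}_\ell(\Sigma_{A_n})$ is the space of $\ell$-dimensional Minkowski weights (balanced real functions on $\ell$-dimensional cones) and $\operatorname{MW}_\bullet=\bigoplus_\ell\operatorname{MW}_\ell$. For a loopless matroid $M'$ of rank $r'$, $\Delta_{M'}\in\operatorname{MW}_{r'-1}(\Sigma_{A_n})$ equals $1$ on cones $\operatorname{Cone}(u_{F_1},\dots,u_{F_{r'-1}})$ with all $F_i$ flats of $M'$ and $0$ otherwise. $M'$ is a quotient of $M$ ($f:M'\twoheadleftarrow M$) if every flat of $M'$ is a flat of $M$; $n_f(A)=\operatorname{rk}_M(A)-\operatorname{rk}_{M'}(A)$; an $f$-cyclic flat is a flat $F$ of $M'$ minimal under inclusion among flats of $M'$ of the same $f$-nullity; $M'$ is a relative nested quotient if its $f$-cyclic flats form a chain. *)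

theory Defs
  imports Complex_Main
begin

definition matroid_on :: "nat set \<Rightarrow> nat set set \<Rightarrow> bool" where
  "matroid_on E I \<longleftrightarrow> finite E \<and> I \<subseteq> Pow E \<and> {} \<in> I
     \<and> (\<forall>X\<in>I. \<forall>Y. Y \<subseteq> X \<longrightarrow> Y \<in> I)
     \<and> (\<forall>X\<in>I. \<forall>Y\<in>I. card X < card Y \<longrightarrow> (\<exists>y\<in>Y - X. insert y X \<in> I))"

definition mrank :: "nat set set \<Rightarrow> nat set \<Rightarrow> nat" where
  "mrank I A = Max (card ` {X \<in> I. X \<subseteq> A})"

definition loopless :: "nat set \<Rightarrow> nat set set \<Rightarrow> bool" where
  "loopless E I \<longleftrightarrow> (\<forall>x\<in>E. {x} \<in> I)"

definition matroid_rank :: "nat set \<Rightarrow> nat set set \<Rightarrow> nat" where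
  "matroid_rank E I = mrank I E"

definition flat :: "nat set \<Rightarrow> nat set set \<Rightarrow> nat set \<Rightarrow> bool" where
  "flat E I F \<longleftrightarrow> F \<subseteq> E \<and> (\<forall>x\<in>E - F. mrank I (insert x F) \<noteq> mrank I F)"

definition is_quotient :: "nat set \<Rightarrow> nat set set \<Rightarrow> nat set set \<Rightarrow> bool" where
  "is_quotient E I' I \<longleftrightarrow> matroid_on E I' \<and> matroid_on E I
     \<and> (\<forall>F. flat E I' F \<longrightarrow> flat E I F)"

definition nullity :: "nat set set \<Rightarrow> nat set set \<Rightarrow> nat set \<Rightarrow> int" where
  "nullity I' I A = int (mrank I A) - int (mrank I' A)"

definition f_cyclic_flat :: "nat set \<Rightarrow> nat set set \<Rightarrow> nat set set \<Rightarrow> nat set \<Rightarrow> bool" where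
  "f_cyclic_flat E I' I F \<longleftrightarrow> flat E I' F \<and>
     (\<forall>G. flat E I' G \<and> G \<subset> F \<longrightarrow> nullity I' I G \<noteq> nullity I' I F)"

definition relative_nested_quotient :: "nat set \<Rightarrow> nat set set \<Rightarrow> nat set set \<Rightarrow> bool" where
  "relative_nested_quotient E I' I \<longleftrightarrow> is_quotient E I' I \<and>
     (\<forall>F G. f_cyclic_flat E I' I F \<and> f_cyclic_flat E I' I G \<longrightarrow> F \<subseteq> G \<or> G \<subseteq> F)"

text \<open>Cones of the braid fan: Cone(u_S1,...,u_Sk) for a chain of proper nonempty subsets
  of E; the cone is identified with its chain (a set of subsets), its dimension is the
  cardinality of the chain.\<close>
definition braid_cone :: "nat set \<Rightarrow> nat set set \<Rightarrow> bool" where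
  "braid_cone E C \<longleftrightarrow> (\<forall>S\<in>C. {} \<subset> S \<and> S \<subset> E) \<and> (\<forall>S\<in>C. \<forall>T\<in>C. S \<subseteq> T \<or> T \<subseteq> S)"

text \<open>Bergman class Delta_{M'} as a (graded) weight on cones of the braid fan:
  1 on (r'-1)-dimensional cones whose rays are all flats of M', 0 otherwise.\<close>
definition bergman_class :: "nat set \<Rightarrow> nat set set \<Rightarrow> nat set set \<Rightarrow> real" where
  "bergman_class E I' C = (if braid_cone E C \<and> card C = matroid_rank E I' - 1
       \<and> (\<forall>F\<in>C. flat E I' F) then 1 else 0)"

end

(*
  Order the loopless relative nested quotients M' of M by the sum of their ranks over all
  subsets of E. The f-cyclic flats of M' form a chain, which extends to a full flag C of flats
  of M', so that Delta_M'(C) = 1. If another loopless quotient M'' of M has Delta_M''(C) <> 0,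
  then C is a full flag of M'' as well, so M' and M'' have the same rank on every member of C.
  For A a subset of E let F be its M'-closure and Z the f-cyclic flat below F of the same
  nullity; Z lies in the chain, and since M'' is a quotient of M,
  rk_M''(F) - rk_M''(Z) <= rk_M(F) - rk_M(Z) = rk_M'(F) - rk_M'(Z), whence
  rk_M''(A) <= rk_M'(A). So M'' = M' or M'' has smaller rank sum: evaluating the Bergman
  classes at these flags gives a triangular matrix with nonzero diagonal.
*)
theory Submission
  imports Defs
begin

lemma finite_chain_has_greatest:
  fixes A :: "'a::order set"
  assumes "finite A" "A \<noteq> {}" "\<forall>x\<in>A. \<forall>y\<in>A. x \<le> y \<or> y \<le> x"
  obtains m where "m \<in> A" "\<forall>x\<in>A. x \<le> m"
  using finite_has_maximal[OF assms(1,2)] assms(3) by metis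

lemma finite_chain_has_least:
  fixes A :: "'a::order set"
  assumes "finite A" "A \<noteq> {}" "\<forall>x\<in>A. \<forall>y\<in>A. x \<le> y \<or> y \<le> x"
  obtains m where "m \<in> A" "\<forall>x\<in>A. m \<le> x"
  using finite_has_minimal[OF assms(1,2)] assms(3) by metis

lemma triangular_family_linear_independent:
  fixes w :: "'a \<Rightarrow> 'b \<Rightarrow> 'c::idom" and S :: "'a \<Rightarrow> nat"
  assumes fin: "finite R"
    and triangular: "\<And>x. x \<in> R \<Longrightarrow> \<exists>t. w x t \<noteq> 0 \<and> (\<forall>y\<in>R. w y t \<noteq> 0 \<longrightarrow> y = x \<or> S y < S x)"
    and zero: "\<forall>t. (\<Sum>y\<in>R. c y * w y t) = 0"
  shows "\<forall>x\<in>R. c x = 0"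
proof (rule ccontr)
  assume "\<not> (\<forall>x\<in>R. c x = 0)"
  then obtain x where x: "x \<in> R" "c x \<noteq> 0" and x_min: "\<And>y. y \<in> R \<Longrightarrow> c y \<noteq> 0 \<Longrightarrow> S x \<le> S y"
    using ex_has_least_nat[of "\<lambda>x. x \<in> R \<and> c x \<noteq> 0" _ S] by blast
  obtain t where t: "w x t \<noteq> 0" "\<forall>y\<in>R. w y t \<noteq> 0 \<longrightarrow> y = x \<or> S y < S x"
    using triangular[OF x(1)] by blast
  have "c y * w y t = 0" if y: "y \<in> R - {x}" for y
  proof (rule ccontr)
    assume "c y * w y t \<noteq> 0"
    then have "c y \<noteq> 0" "w y t \<noteq> 0" by auto
    then have "S y < S x" using y t(2) by blast
    then show False using x_min[of y] y \<open>c y \<noteq> 0\<close> by simp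
  qed
  then have "(\<Sum>y\<in>R - {x}. c y * w y t) = 0" by (intro sum.neutral) blast
  then have "(\<Sum>y\<in>R. c y * w y t) = c x * w x t"
    using sum.remove[OF fin x(1), of "\<lambda>y. c y * w y t"] by simp
  then show False using zero x(2) t(1) by simp
qed

locale matroid =
  fixes E :: "nat set" and I :: "nat set set"
  assumes matroid_on: "matroid_on E I"
begin

lemma finite_ground: "finite E"
  using matroid_on unfolding matroid_on_def by blast

lemma indep_subset_ground: "X \<in> I \<Longrightarrow> X \<subseteq> E"
  using matroid_on unfolding matroid_on_def by blast

lemma finite_indep: "X \<in> I \<Longrightarrow> finite X"
  using finite_ground indep_subset_ground finite_subset by blast

lemma finite_indep_family: "finite I"
  using matroid_on finite_ground unfolding matroid_on_def by (meson finite_Pow_iff finite_subset)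

lemma empty_indep: "{} \<in> I"
  using matroid_on unfolding matroid_on_def by blast

lemma indep_subset: "X \<in> I \<Longrightarrow> Y \<subseteq> X \<Longrightarrow> Y \<in> I"
  using matroid_on unfolding matroid_on_def by blast

lemma indep_augment: "X \<in> I \<Longrightarrow> Y \<in> I \<Longrightarrow> card X < card Y \<Longrightarrow> \<exists>y\<in>Y - X. insert y X \<in> I"
  using matroid_on unfolding matroid_on_def by blast

lemma card_le_rank: "X \<in> I \<Longrightarrow> X \<subseteq> A \<Longrightarrow> card X \<le> mrank I A"
  unfolding mrank_def using finite_indep_family by (intro Max_ge) auto

lemma rank_witness:
  obtains X where "X \<in> I" "X \<subseteq> A" "card X = mrank I A"
proof -
  have "mrank I A \<in> card ` {X \<in> I. X \<subseteq> A}"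
    unfolding mrank_def using finite_indep_family empty_indep by (intro Max_in) auto
  then show ?thesis using that by auto
qed

lemma rank_mono: "A \<subseteq> B \<Longrightarrow> mrank I A \<le> mrank I B"
  by (metis card_le_rank rank_witness order_trans)

lemma rank_insert_le: "mrank I (insert x A) \<le> mrank I A + 1"
proof -
  obtain X where X: "X \<in> I" "X \<subseteq> insert x A" "card X = mrank I (insert x A)"
    using rank_witness by metis
  have "card (X - {x}) \<le> mrank I A"
    using X indep_subset by (intro card_le_rank) auto
  moreover have "card X \<le> card (X - {x}) + 1"
    using finite_indep[OF X(1)] by (cases "x \<in> X") (auto simp: card_Diff_singleton_if)
  ultimately show ?thesis using X by linarith
qed

lemma rank_empty: "mrank I {} = 0"
  by (metis rank_witness card_0_eq finite.emptyI subset_empty)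

lemma rank_indep: "X \<in> I \<Longrightarrow> mrank I X = card X"
  by (metis card_le_rank card_mono finite_indep le_antisym order_refl rank_witness)

lemma indep_iff_rank_eq_card: "X \<subseteq> E \<Longrightarrow> X \<in> I \<longleftrightarrow> mrank I X = card X"
proof
  assume XE: "X \<subseteq> E" and rk: "mrank I X = card X"
  obtain Y where "Y \<in> I" "Y \<subseteq> X" "card Y = card X"
    using rank_witness rk by metis
  then show "X \<in> I"
    using card_subset_eq finite_ground XE finite_subset by metis
qed (rule rank_indep)

lemma extend_to_basis:
  assumes "J \<in> I" "J \<subseteq> A"
  obtains B where "B \<in> I" "J \<subseteq> B" "B \<subseteq> A" "card B = mrank I A"
proof -
  let ?K = "{B \<in> I. J \<subseteq> B \<and> B \<subseteq> A}"
  have "finite ?K" using finite_indep_family by auto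
  moreover have "J \<in> ?K" using assms by auto
  ultimately have "Max (card ` ?K) \<in> card ` ?K"
    by (intro Max_in) auto
  then obtain B where B: "B \<in> ?K" "card B = Max (card ` ?K)" by auto
  have B_max: "card B' \<le> card B" if "B' \<in> ?K" for B'
    using B(2) \<open>finite ?K\<close> that by simp
  have "\<not> card B < mrank I A"
  proof
    assume lt: "card B < mrank I A"
    obtain Y where Y: "Y \<in> I" "Y \<subseteq> A" "card Y = mrank I A" using rank_witness by metis
    have "B \<in> I" "card B < card Y" using B lt Y(3) by auto
    then obtain y where y: "y \<in> Y - B" "insert y B \<in> I"
      using indep_augment Y(1) by blast
    then have "insert y B \<in> ?K" using B \<open>Y \<subseteq> A\<close> by auto
    moreover have "card (insert y B) = card B + 1" using y B finite_indep by auto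
    ultimately show False using B_max by fastforce
  qed
  then show ?thesis using that B card_le_rank[of B A] by auto
qed

lemma rank_insert_eq_superset:
  assumes XG: "X \<subseteq> G" and eq: "mrank I (insert e X) = mrank I X"
  shows "mrank I (insert e G) = mrank I G"
proof (rule ccontr)
  assume "mrank I (insert e G) \<noteq> mrank I G"
  then have gt: "mrank I G < mrank I (insert e G)"
    using rank_mono[of G "insert e G"] by force
  obtain BX where BX: "BX \<in> I" "BX \<subseteq> X" "card BX = mrank I X"
    using rank_witness by metis
  obtain BG where BG: "BG \<in> I" "BX \<subseteq> BG" "BG \<subseteq> G" "card BG = mrank I G"
  proof (rule extend_to_basis[OF BX(1)])
    show "BX \<subseteq> G" using BX(2) XG by blast
  qed
  obtain B where B: "B \<in> I" "B \<subseteq> insert e G" "card B = mrank I (insert e G)"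
    using rank_witness by metis
  obtain y where y: "y \<in> B - BG" "insert y BG \<in> I"
    using indep_augment[OF BG(1) B(1)] gt BG(4) B(3) by auto
  show False
  proof (cases "y = e")
    case True
    have "insert e BX \<in> I" using indep_subset[OF y(2)] True BG(2) by blast
    then have "card (insert e BX) \<le> mrank I (insert e X)"
      using card_le_rank BX(2) by blast
    moreover have "e \<notin> BX" using y True BG(2) by auto
    ultimately show False using eq BX finite_indep by simp
  next
    case False
    then have "card (insert y BG) \<le> mrank I G"
      using card_le_rank[OF y(2)] y(1) B(2) BG(3) by auto
    then show False using y BG finite_indep by simp
  qed
qed

lemma rank_Un_eq:
  assumes "finite S" and "\<forall>e\<in>S. mrank I (insert e X) = mrank I X"
  shows "mrank I (X \<union> S) = mrank I X"
  using assms
proof (induction S rule: finite_induct)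
  case (insert e S)
  then have "mrank I (insert e (X \<union> S)) = mrank I (X \<union> S)"
    using rank_insert_eq_superset[of X "X \<union> S" e] by auto
  then show ?case using insert by simp
qed simp

end

definition mclosure :: "nat set \<Rightarrow> nat set set \<Rightarrow> nat set \<Rightarrow> nat set" where
  "mclosure E I X = {e \<in> E. mrank I (insert e X) = mrank I X}"

lemma flat_ground: "flat E I E"
  unfolding flat_def by auto

lemma flat_subset_ground: "flat E I F \<Longrightarrow> F \<subseteq> E"
  unfolding flat_def by auto

context matroid
begin

lemma subset_mclosure: "X \<subseteq> E \<Longrightarrow> X \<subseteq> mclosure E I X"
  unfolding mclosure_def by (auto simp: insert_absorb)

lemma rank_mclosure:
  assumes "X \<subseteq> E"
  shows "mrank I (mclosure E I X) = mrank I X"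
proof -
  have "mclosure E I X = X \<union> mclosure E I X"
    using subset_mclosure[OF assms] by blast
  also have "mrank I \<dots> = mrank I X"
    using finite_ground by (intro rank_Un_eq) (auto simp: mclosure_def)
  finally show ?thesis .
qed

lemma flat_mclosure:
  assumes X: "X \<subseteq> E"
  shows "flat E I (mclosure E I X)"
  unfolding flat_def
proof safe
  fix x assume x: "x \<in> E" "x \<notin> mclosure E I X"
    and eq: "mrank I (insert x (mclosure E I X)) = mrank I (mclosure E I X)"
  have "mrank I (insert x X) \<le> mrank I (insert x (mclosure E I X))"
    using rank_mono subset_mclosure[OF X] by (meson insert_mono)
  moreover have "mrank I X \<le> mrank I (insert x X)"
    using rank_mono by (meson subset_insertI)
  moreover have "mrank I (insert x X) \<noteq> mrank I X"
    using x unfolding mclosure_def by auto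
  ultimately show False using eq rank_mclosure[OF X] by linarith
qed (auto simp: mclosure_def)

lemma mem_flat_if_rank_insert_eq:
  "flat E I G \<Longrightarrow> X \<subseteq> G \<Longrightarrow> e \<in> E \<Longrightarrow> mrank I (insert e X) = mrank I X \<Longrightarrow> e \<in> G"
  using rank_insert_eq_superset unfolding flat_def by blast

lemma mclosure_least: "flat E I G \<Longrightarrow> X \<subseteq> G \<Longrightarrow> mclosure E I X \<subseteq> G"
  using mem_flat_if_rank_insert_eq unfolding mclosure_def by blast

lemma rank_insert_flat: "flat E I F \<Longrightarrow> e \<in> E - F \<Longrightarrow> mrank I (insert e F) = mrank I F + 1"
  using rank_insert_le[of e F] rank_mono[of F "insert e F"] unfolding flat_def by force

lemma rank_strict_mono_flat:
  assumes F: "flat E I F" and G: "flat E I G" and FG: "F \<subset> G"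
  shows "mrank I F < mrank I G"
proof -
  obtain e where e: "e \<in> G - F" using FG by auto
  then have "mrank I (insert e F) = mrank I F + 1"
    using rank_insert_flat[OF F] flat_subset_ground[OF G] by auto
  moreover have "mrank I (insert e F) \<le> mrank I G" using rank_mono e FG by auto
  ultimately show ?thesis by simp
qed

lemma flat_cover_within:
  assumes F: "flat E I F" and G: "flat E I G" and FG: "F \<subset> G"
  obtains H where "flat E I H" "F \<subset> H" "H \<subseteq> G" "mrank I H = mrank I F + 1"
proof -
  obtain e where e: "e \<in> G - F" using FG by blast
  have eF: "insert e F \<subseteq> E" using e flat_subset_ground[OF F] flat_subset_ground[OF G] by blast
  let ?H = "mclosure E I (insert e F)"
  show ?thesis
  proof (rule that)
    show "flat E I ?H" using flat_mclosure[OF eF] .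
    show "F \<subset> ?H" using subset_mclosure[OF eF] e by blast
    show "?H \<subseteq> G" using mclosure_least[OF G] e FG by blast
    show "mrank I ?H = mrank I F + 1"
      using rank_mclosure[OF eF] rank_insert_flat[OF F, of e] e flat_subset_ground[OF G] by auto
  qed
qed

end

locale loopless_matroid = matroid +
  assumes loopless: "loopless E I"
begin

lemma flat_empty: "flat E I {}"
  using loopless rank_indep rank_empty unfolding loopless_def flat_def by auto

lemma rank_pos:
  assumes "F \<subseteq> E" "F \<noteq> {}"
  shows "1 \<le> mrank I F"
proof -
  obtain x where x: "x \<in> F" using assms(2) by blast
  then have "mrank I {x} = 1"
    using loopless assms(1) rank_indep unfolding loopless_def by auto
  then show ?thesis using rank_mono[of "{x}" F] x by simp
qed

end

definition flag_of_flats :: "nat set \<Rightarrow> nat set set \<Rightarrow> nat set set \<Rightarrow> bool" where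
  "flag_of_flats E I C \<longleftrightarrow> braid_cone E C \<and> (\<forall>F\<in>C. flat E I F)"

definition full_flag :: "nat set \<Rightarrow> nat set set \<Rightarrow> nat set set \<Rightarrow> bool" where
  "full_flag E I C \<longleftrightarrow> flag_of_flats E I C \<and> card C = matroid_rank E I - 1"

lemma bergman_class_eq: "bergman_class E I C = (if full_flag E I C then 1 else 0)"
  unfolding bergman_class_def full_flag_def flag_of_flats_def by auto

lemma flag_of_flats_chain: "flag_of_flats E I C \<Longrightarrow> S \<in> C \<Longrightarrow> T \<in> C \<Longrightarrow> S \<subseteq> T \<or> T \<subseteq> S"
  unfolding flag_of_flats_def braid_cone_def by blast

context loopless_matroid
begin

lemma finite_flag: "flag_of_flats E I C \<Longrightarrow> finite C"
  using finite_ground unfolding flag_of_flats_def braid_cone_def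
  by (meson Pow_iff finite_Pow_iff finite_subset psubset_imp_subset subsetI)

lemma rank_flag_member_bounds:
  assumes "flag_of_flats E I C" "F \<in> C"
  shows "1 \<le> mrank I F" "mrank I F < matroid_rank E I"
proof -
  have "flat E I F" "{} \<subset> F" "F \<subset> E"
    using assms unfolding flag_of_flats_def braid_cone_def by auto
  then show "1 \<le> mrank I F" "mrank I F < matroid_rank E I"
    using rank_pos rank_strict_mono_flat flat_ground unfolding matroid_rank_def by auto
qed

lemma inj_on_rank_flag: "flag_of_flats E I C \<Longrightarrow> inj_on (mrank I) C"
  by (rule inj_onI) (metis flag_of_flats_chain flag_of_flats_def rank_strict_mono_flat
      less_irrefl psubsetI)

lemma card_flag_le:
  assumes "flag_of_flats E I C"
  shows "card C \<le> matroid_rank E I - 1"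
proof -
  have "card C = card (mrank I ` C)"
    using card_image[OF inj_on_rank_flag[OF assms]] by simp
  also have "\<dots> \<le> card {1..<matroid_rank E I}"
    using rank_flag_member_bounds[OF assms] by (intro card_mono) auto
  finally show ?thesis by simp
qed

lemma rank_full_flag_member:
  assumes "full_flag E I C" and F: "F \<in> C"
  shows "mrank I F = card {G \<in> C. G \<subseteq> F}"
proof -
  have C: "flag_of_flats E I C" "card C = matroid_rank E I - 1"
    using assms(1) unfolding full_flag_def by auto
  let ?below = "{G \<in> C. G \<subseteq> F}" and ?above = "{G \<in> C. \<not> G \<subseteq> F}"
  have inj: "inj_on (mrank I) C" using inj_on_rank_flag[OF C(1)] .
  have "card ?below = card (mrank I ` ?below)"
    using card_image[OF inj_on_subset[OF inj]] by auto
  also have "\<dots> \<le> card {1..mrank I F}"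
    using rank_flag_member_bounds[OF C(1)] rank_mono by (intro card_mono) auto
  finally have below: "card ?below \<le> mrank I F" by simp
  have "mrank I G \<in> {mrank I F <..< matroid_rank E I}" if G: "G \<in> ?above" for G
  proof -
    have "F \<subset> G" using G F flag_of_flats_chain[OF C(1), of F G] by auto
    then have "mrank I F < mrank I G"
      using G F C(1) rank_strict_mono_flat unfolding flag_of_flats_def by blast
    then show ?thesis using rank_flag_member_bounds(2)[OF C(1)] G by simp
  qed
  then have "mrank I ` ?above \<subseteq> {mrank I F <..< matroid_rank E I}"
    by blast
  then have "card (mrank I ` ?above) \<le> matroid_rank E I - 1 - mrank I F"
    using card_mono[of "{mrank I F <..< matroid_rank E I}"] by fastforce
  then have above: "card ?above \<le> matroid_rank E I - 1 - mrank I F"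
    using card_image[OF inj_on_subset[OF inj]] by (metis (no_types, lifting) mem_Collect_eq subsetI)
  have "card C = card (?below \<union> ?above)"
    by (rule arg_cong[where f = card]) blast
  also have "\<dots> = card ?below + card ?above"
    using finite_flag[OF C(1)] by (intro card_Un_disjoint) auto
  finally have "card C = card ?below + card ?above" .
  then show ?thesis using below above C(2) rank_flag_member_bounds[OF C(1) F] by linarith
qed

lemma flag_gap:
  assumes C: "flag_of_flats E I C" and k: "1 \<le> k" "k < matroid_rank E I" "k \<notin> mrank I ` C"
  obtains F G where "flat E I F" "flat E I G" "F \<subset> G" "mrank I F < k" "k < mrank I G"
    "\<forall>X\<in>C. X \<subseteq> F \<or> G \<subseteq> X"
proof -
  let ?C = "insert {} (insert E C)"
  have fin: "finite ?C" using finite_flag[OF C] by simp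
  have flats: "\<forall>X\<in>?C. flat E I X"
    using C flat_empty flat_ground unfolding flag_of_flats_def by auto
  have chain: "\<forall>X\<in>?C. \<forall>Y\<in>?C. X \<subseteq> Y \<or> Y \<subseteq> X"
    using C flag_of_flats_chain[OF C] unfolding flag_of_flats_def braid_cone_def by blast
  have rank_ne: "mrank I X \<noteq> k" if "X \<in> ?C" for X
    using that k rank_empty unfolding matroid_rank_def by auto
  obtain F where F: "F \<in> ?C" "mrank I F < k" "\<forall>X\<in>?C. mrank I X < k \<longrightarrow> X \<subseteq> F"
  proof -
    let ?B = "{X \<in> ?C. mrank I X < k}"
    have "{} \<in> ?B" using rank_empty k(1) by simp
    then have B: "finite ?B" "?B \<noteq> {}" "\<forall>X\<in>?B. \<forall>Y\<in>?B. X \<subseteq> Y \<or> Y \<subseteq> X"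
      using fin chain by (simp, blast, blast)
    obtain m where "m \<in> ?B" "\<forall>X\<in>?B. X \<subseteq> m"
      by (rule finite_chain_has_greatest[OF B])
    then show ?thesis by (intro that[of m]) simp_all
  qed
  obtain G where G: "G \<in> ?C" "k < mrank I G" "\<forall>X\<in>?C. k < mrank I X \<longrightarrow> G \<subseteq> X"
  proof -
    let ?B = "{X \<in> ?C. k < mrank I X}"
    have "E \<in> ?B" using k(2) unfolding matroid_rank_def by simp
    then have B: "finite ?B" "?B \<noteq> {}" "\<forall>X\<in>?B. \<forall>Y\<in>?B. X \<subseteq> Y \<or> Y \<subseteq> X"
      using fin chain by (simp, blast, blast)
    obtain m where "m \<in> ?B" "\<forall>X\<in>?B. m \<subseteq> X"
      by (rule finite_chain_has_least[OF B])
    then show ?thesis by (intro that[of m]) simp_all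
  qed
  have "F \<subseteq> G \<or> G \<subseteq> F" using chain F(1) G(1) by blast
  moreover have "\<not> G \<subseteq> F" using rank_mono[of G F] F(2) G(2) by linarith
  ultimately have FG: "F \<subset> G" by blast
  have "\<forall>X\<in>C. X \<subseteq> F \<or> G \<subseteq> X"
  proof
    fix X assume "X \<in> C"
    then have "X \<in> ?C" by blast
    then have "mrank I X < k \<or> k < mrank I X" using rank_ne by (meson linorder_neqE_nat)
    then show "X \<subseteq> F \<or> G \<subseteq> X" using F(3) G(3) \<open>X \<in> ?C\<close> by blast
  qed
  moreover have "flat E I F" "flat E I G" using flats F(1) G(1) by blast+
  ultimately show ?thesis using that FG F(2) G(2) by blast
qed

lemma flag_insert:
  assumes C: "flag_of_flats E I C" and lt: "card C < matroid_rank E I - 1"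
  obtains H where "H \<notin> C" "flag_of_flats E I (insert H C)"
proof -
  have "card (mrank I ` C) < card {1..<matroid_rank E I}"
    using card_image_le[OF finite_flag[OF C], of "mrank I"] lt by simp
  then have "\<not> {1..<matroid_rank E I} \<subseteq> mrank I ` C"
    using card_mono[OF finite_imageI[OF finite_flag[OF C]]] by (meson not_le)
  then obtain k where k: "1 \<le> k" "k < matroid_rank E I" "k \<notin> mrank I ` C"
    by (meson atLeastLessThan_iff subsetI)
  obtain F G where F: "flat E I F" and G: "flat E I G" and FG: "F \<subset> G"
    and ranks: "mrank I F < k" "k < mrank I G" and below_or_above: "\<forall>X\<in>C. X \<subseteq> F \<or> G \<subseteq> X"
    by (rule flag_gap[OF C k])
  obtain H where H_flat: "flat E I H" and FH: "F \<subset> H" and HG: "H \<subseteq> G"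
    and H_rank: "mrank I H = mrank I F + 1"
    by (rule flat_cover_within[OF F G FG])
  have "H \<noteq> G" using H_rank ranks by auto
  then have HE: "H \<subset> E" using HG flat_subset_ground[OF G] by blast
  have "H \<notin> C"
  proof
    assume "H \<in> C"
    then have "H \<subseteq> F \<or> G \<subseteq> H" using below_or_above by blast
    then show False using FH HG \<open>H \<noteq> G\<close> by blast
  qed
  moreover have "flag_of_flats E I (insert H C)"
  proof -
    have C_cone: "\<forall>S\<in>C. {} \<subset> S \<and> S \<subset> E" "\<forall>S\<in>C. \<forall>T\<in>C. S \<subseteq> T \<or> T \<subseteq> S"
      and C_flats: "\<forall>X\<in>C. flat E I X"
      using C unfolding flag_of_flats_def braid_cone_def by auto
    have H_cmp: "\<forall>X\<in>C. X \<subseteq> H \<or> H \<subseteq> X" using below_or_above FH HG by blast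
    have "\<forall>S\<in>insert H C. {} \<subset> S \<and> S \<subset> E" using C_cone(1) FH HE by blast
    moreover have "\<forall>S\<in>insert H C. \<forall>T\<in>insert H C. S \<subseteq> T \<or> T \<subseteq> S"
    proof (intro ballI)
      fix S T assume "S \<in> insert H C" "T \<in> insert H C"
      then show "S \<subseteq> T \<or> T \<subseteq> S"
        using C_cone(2) H_cmp by (cases "S = H"; cases "T = H") auto
    qed
    moreover have "\<forall>X\<in>insert H C. flat E I X" using C_flats H_flat by simp
    ultimately show ?thesis unfolding flag_of_flats_def braid_cone_def by blast
  qed
  ultimately show ?thesis using that by blast
qed

lemma flag_extend_full:
  assumes "flag_of_flats E I C"
  obtains C' where "C \<subseteq> C'" "full_flag E I C'"
  using assms
proof (induction "matroid_rank E I - 1 - card C" arbitrary: C rule: less_induct)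
  case less
  show ?case
  proof (cases "card C < matroid_rank E I - 1")
    case True
    then obtain H where H: "H \<notin> C" "flag_of_flats E I (insert H C)"
      using flag_insert[OF less.prems(2)] by blast
    have "card (insert H C) = card C + 1" using H finite_flag[OF less.prems(2)] by simp
    then show ?thesis
      using less.hyps[OF _ less.prems(1)[OF subset_trans[OF subset_insertI]] H(2)] True by simp
  next
    case False
    then show ?thesis
      using less.prems card_flag_le[OF less.prems(2)] unfolding full_flag_def by auto
  qed
qed

end

lemma matroid_eqI_rank:
  assumes "matroid E I1" "matroid E I2" "\<forall>A\<subseteq>E. mrank I1 A = mrank I2 A"
  shows "I1 = I2"
proof -
  have "X \<in> I1 \<longleftrightarrow> X \<in> I2" for X
  proof (cases "X \<subseteq> E")
    case True
    then show ?thesis using matroid.indep_iff_rank_eq_card[OF assms(1) True]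
        matroid.indep_iff_rank_eq_card[OF assms(2) True] assms(3) by simp
  next
    case False
    then show ?thesis
      using matroid.indep_subset_ground[OF assms(1)] matroid.indep_subset_ground[OF assms(2)] by blast
  qed
  then show ?thesis by blast
qed

lemma finite_matroids_on: "finite E \<Longrightarrow> finite {I. matroid_on E I}"
  unfolding matroid_on_def by (rule finite_subset[of _ "Pow (Pow E)"]) auto

lemma is_quotient_matroids:
  assumes "is_quotient E I' I"
  shows "matroid E I'" "matroid E I"
  using assms unfolding is_quotient_def by (simp_all add: matroid.intro)

lemma quotient_rank_insert_le:
  assumes Q: "is_quotient E I' I" and A: "A \<subseteq> E" and e: "e \<in> E"
  shows "mrank I' (insert e A) + mrank I A \<le> mrank I' A + mrank I (insert e A)"
proof -
  interpret M': matroid E I' using is_quotient_matroids[OF Q] by simp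
  interpret M: matroid E I using is_quotient_matroids[OF Q] by simp
  show ?thesis
  proof (cases "mrank I (insert e A) = mrank I A")
    case True
    \<comment> \<open>The M'-closure of A is a flat of M', hence of M, so it absorbs e.\<close>
    have "flat E I (mclosure E I' A)"
      using Q M'.flat_mclosure[OF A] unfolding is_quotient_def by blast
    then have "e \<in> mclosure E I' A"
      using M.mem_flat_if_rank_insert_eq M'.subset_mclosure[OF A] e True by blast
    then have "mrank I' (insert e A) \<le> mrank I' A"
      using M'.rank_mono[of "insert e A" "mclosure E I' A"] M'.rank_mclosure[OF A]
        M'.subset_mclosure[OF A] by simp
    then show ?thesis using True by linarith
  next
    case False
    then show ?thesis
      using M.rank_mono[of A "insert e A"] M.rank_insert_le[of e A] M'.rank_insert_le[of e A]
      by fastforce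
  qed
qed

lemma quotient_rank_diff_le:
  assumes Q: "is_quotient E I' I" and XY: "X \<subseteq> Y" and Y: "Y \<subseteq> E"
  shows "mrank I' Y + mrank I X \<le> mrank I' X + mrank I Y"
proof -
  have "mrank I' (X \<union> S) + mrank I X \<le> mrank I' X + mrank I (X \<union> S)"
    if "finite S" "S \<subseteq> E" for S
    using that
  proof (induction S rule: finite_induct)
    case (insert e S)
    then have "mrank I' (insert e (X \<union> S)) + mrank I (X \<union> S)
        \<le> mrank I' (X \<union> S) + mrank I (insert e (X \<union> S))"
      using quotient_rank_insert_le[OF Q, of "X \<union> S" e] XY Y by auto
    then show ?case using insert by simp
  qed simp
  moreover have "finite Y"
    using Y matroid.finite_ground[OF is_quotient_matroids(1)[OF Q]] finite_subset by blast
  ultimately show ?thesis using XY Y by (metis sup.absorb2)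
qed

lemma (in matroid) f_cyclic_flat_below:
  assumes F: "flat E I F"
  obtains Z where "Z \<subseteq> F" "f_cyclic_flat E I M Z" "nullity I M Z = nullity I M F"
proof -
  let ?Fs = "{G. flat E I G \<and> G \<subseteq> F \<and> nullity I M G = nullity I M F}"
  have "finite (Pow F)" using finite_ground flat_subset_ground[OF F] finite_subset by auto
  then have "finite ?Fs" by (rule finite_subset[rotated]) blast
  moreover have "F \<in> ?Fs" using F by simp
  ultimately obtain Z where Z: "Z \<in> ?Fs" and Z_min: "\<forall>G\<in>?Fs. G \<subseteq> Z \<longrightarrow> Z = G"
    using finite_has_minimal[of ?Fs] by blast
  have "f_cyclic_flat E I M Z"
    unfolding f_cyclic_flat_def using Z Z_min by auto
  then show ?thesis using that Z by blast
qed

lemma (in loopless_matroid) full_flag_containing_f_cyclic_flats: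
  assumes "\<forall>F G. f_cyclic_flat E I M F \<and> f_cyclic_flat E I M G \<longrightarrow> F \<subseteq> G \<or> G \<subseteq> F"
  obtains C where "full_flag E I C" "{Z. f_cyclic_flat E I M Z} \<subseteq> insert {} (insert E C)"
proof -
  let ?C = "{Z. f_cyclic_flat E I M Z \<and> Z \<noteq> {} \<and> Z \<noteq> E}"
  have cyc_flat: "flat E I Z" if "f_cyclic_flat E I M Z" for Z
    using that unfolding f_cyclic_flat_def by blast
  have "\<forall>S\<in>?C. {} \<subset> S \<and> S \<subset> E"
    using cyc_flat flat_subset_ground by blast
  moreover have "\<forall>S\<in>?C. \<forall>T\<in>?C. S \<subseteq> T \<or> T \<subseteq> S"
    using assms by blast
  ultimately have "flag_of_flats E I ?C"
    unfolding flag_of_flats_def braid_cone_def using cyc_flat by simp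
  then obtain C where "?C \<subseteq> C" "full_flag E I C"
    by (rule flag_extend_full)
  moreover then have "{Z. f_cyclic_flat E I M Z} \<subseteq> insert {} (insert E C)" by blast
  ultimately show ?thesis using that by blast
qed

lemma full_flags_rank_agree:
  assumes L1: "loopless_matroid E I1" and L2: "loopless_matroid E I2"
    and C1: "full_flag E I1 C" and C2: "full_flag E I2 C"
    and F: "F \<in> insert {} (insert E C)"
  shows "mrank I1 F = mrank I2 F"
proof -
  interpret L1: loopless_matroid E I1 by (fact L1)
  interpret L2: loopless_matroid E I2 by (fact L2)
  consider "F = {}" | "F = E" "E \<noteq> {}" | "F \<in> C" using F by blast
  then show ?thesis
  proof cases
    case 1
    then show ?thesis using L1.rank_empty L2.rank_empty by simp
  next
    case 2
    then have "1 \<le> matroid_rank E I1" "1 \<le> matroid_rank E I2"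
      using L1.rank_pos L2.rank_pos unfolding matroid_rank_def by auto
    moreover have "card C = matroid_rank E I1 - 1" "card C = matroid_rank E I2 - 1"
      using C1 C2 unfolding full_flag_def by simp_all
    ultimately show ?thesis using 2 unfolding matroid_rank_def by simp
  next
    case 3
    then show ?thesis using L1.rank_full_flag_member[OF C1] L2.rank_full_flag_member[OF C2] by simp
  qed
qed

lemma quotient_rank_le_of_shared_full_flag:
  assumes L0: "loopless_matroid E I0" and Q: "is_quotient E J I" and LJ: "loopless E J"
    and C0: "full_flag E I0 C" and CJ: "full_flag E J C"
    and cyclic: "{Z. f_cyclic_flat E I0 I Z} \<subseteq> insert {} (insert E C)"
    and A: "A \<subseteq> E"
  shows "mrank J A \<le> mrank I0 A"
proof -
  interpret M0: loopless_matroid E I0 by (fact L0)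
  have MJ: "matroid E J" using is_quotient_matroids[OF Q] by simp
  have LMJ: "loopless_matroid E J"
    using MJ LJ by (intro loopless_matroid.intro loopless_matroid_axioms.intro)
  define F where "F = mclosure E I0 A"
  have F_flat: "flat E I0 F" unfolding F_def using M0.flat_mclosure[OF A] .
  obtain Z where Z: "Z \<subseteq> F" "f_cyclic_flat E I0 I Z" "nullity I0 I Z = nullity I0 I F"
    using M0.f_cyclic_flat_below[OF F_flat] .
  have "mrank J Z = mrank I0 Z"
    using full_flags_rank_agree[OF LMJ L0 CJ C0] cyclic Z(2) by blast
  moreover have "mrank J F + mrank I Z \<le> mrank J Z + mrank I F"
    using quotient_rank_diff_le[OF Q Z(1) flat_subset_ground[OF F_flat]] .
  moreover have "mrank J A \<le> mrank J F"
    unfolding F_def using matroid.rank_mono[OF MJ M0.subset_mclosure[OF A]] .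
  moreover have "mrank I0 F = mrank I0 A"
    unfolding F_def using M0.rank_mclosure[OF A] .
  ultimately show ?thesis using Z(3) unfolding nullity_def by linarith
qed

definition rank_sum :: "nat set \<Rightarrow> nat set set \<Rightarrow> nat" where
  "rank_sum E I = (\<Sum>A\<in>Pow E. mrank I A)"

lemma rank_sum_strict_mono:
  assumes M1: "matroid E I1" and M2: "matroid E I2"
    and le: "\<forall>A\<subseteq>E. mrank I1 A \<le> mrank I2 A" and ne: "I1 \<noteq> I2"
  shows "rank_sum E I1 < rank_sum E I2"
proof -
  obtain A where "A \<subseteq> E" "mrank I1 A \<noteq> mrank I2 A"
    using matroid_eqI_rank[OF M1 M2] ne by blast
  then show ?thesis
    unfolding rank_sum_def using le matroid.finite_ground[OF M1]
    by (intro sum_strict_mono_ex1) (auto intro: le_neq_implies_less)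
qed

lemma bergman_class_triangular:
  assumes L0: "loopless E I0" and R0: "relative_nested_quotient E I0 I"
  obtains C where "bergman_class E I0 C = 1"
    "\<And>J. is_quotient E J I \<Longrightarrow> loopless E J \<Longrightarrow> bergman_class E J C \<noteq> 0
      \<Longrightarrow> J = I0 \<or> rank_sum E J < rank_sum E I0"
proof -
  have Q0: "is_quotient E I0 I" using R0 unfolding relative_nested_quotient_def by blast
  have LM0: "loopless_matroid E I0"
    using is_quotient_matroids(1)[OF Q0] L0
    by (intro loopless_matroid.intro loopless_matroid_axioms.intro)
  obtain C where C0: "full_flag E I0 C"
    and cyclic: "{Z. f_cyclic_flat E I0 I Z} \<subseteq> insert {} (insert E C)"
    using loopless_matroid.full_flag_containing_f_cyclic_flats[OF LM0] R0
    unfolding relative_nested_quotient_def by blast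
  have "J = I0 \<or> rank_sum E J < rank_sum E I0"
    if Q: "is_quotient E J I" and LJ: "loopless E J" and "bergman_class E J C \<noteq> 0" for J
  proof -
    have CJ: "full_flag E J C"
      using \<open>bergman_class E J C \<noteq> 0\<close> unfolding bergman_class_eq by (simp split: if_splits)
    have "\<forall>A\<subseteq>E. mrank J A \<le> mrank I0 A"
      using quotient_rank_le_of_shared_full_flag[OF LM0 Q LJ C0 CJ cyclic] by blast
    then show ?thesis
      using rank_sum_strict_mono is_quotient_matroids(1)[OF Q] is_quotient_matroids(1)[OF Q0] by blast
  qed
  moreover have "bergman_class E I0 C = 1" using C0 unfolding bergman_class_eq by simp
  ultimately show ?thesis using that by blast
qed

theorem proposition3p25:
  fixes n :: nat and I :: "nat set set" and c :: "nat set set \<Rightarrow> real"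
  defines "E \<equiv> {0..n}"
  defines "RNQ \<equiv> {I'. loopless E I' \<and> relative_nested_quotient E I' I}"
  assumes "matroid_on E I" and "loopless E I"
  assumes "\<forall>C. (\<Sum>I'\<in>RNQ. c I' * bergman_class E I' C) = 0"
  shows "\<forall>I'\<in>RNQ. c I' = 0"
proof (rule triangular_family_linear_independent[where S = "rank_sum E"])
  have "RNQ \<subseteq> {J. matroid_on E J}"
    unfolding RNQ_def relative_nested_quotient_def is_quotient_def by blast
  then show "finite RNQ"
    using finite_matroids_on[of E] finite_subset unfolding E_def by blast
next
  fix I0 assume "I0 \<in> RNQ"
  then have L0: "loopless E I0" and R0: "relative_nested_quotient E I0 I"
    unfolding RNQ_def by simp_all
  obtain C where C: "bergman_class E I0 C = 1"
    and lower: "\<And>J. is_quotient E J I \<Longrightarrow> loopless E J \<Longrightarrow> bergman_class E J C \<noteq> 0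
      \<Longrightarrow> J = I0 \<or> rank_sum E J < rank_sum E I0"
    by (rule bergman_class_triangular[OF L0 R0]) blast
  have "is_quotient E J I" "loopless E J" if "J \<in> RNQ" for J
    using that unfolding RNQ_def relative_nested_quotient_def by simp_all
  then show "\<exists>C. bergman_class E I0 C \<noteq> 0
      \<and> (\<forall>J\<in>RNQ. bergman_class E J C \<noteq> 0 \<longrightarrow> J = I0 \<or> rank_sum E J < rank_sum E I0)"
    using C lower by (intro exI[of _ C]) simp
qed (use assms(5) in blast)

end
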